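(* Let $T>0$ and let $\Gamma:\Delta_T\to\mathbb{R}_+$ be a double kernel that preserves nonnegativity on $[0,T]$ and such that $\Gamma(s,s)=\gamma>0$ is constant for $s\in[0,T]$. Then the double kernel $\tilde\Gamma(t,s)=\Gamma(T-s,T-t)$, $(t,s)\in\Delta_T$, preserves nonnegativity on $[0,T]$.
   Context: $\Delta_T=\{(t,s):0\le s\le t\le T\}$. $\Gamma:\Delta_T\to\mathbb{R}_+$ preserves nonnegativity on $[0,T]$ if for any $K\in\mathbb{N}^*$, $x_1,\dots,x_K\in\mathbb{R}$ and $0\le t_1<\dots<t_K<T$ with $\sum_{k'=1}^kx_{k'}\Gamma(t_k,t_{k'})\ge0$ for all $k$, one has $\sum_{k:t_k\le t}x_k\Gamma(t,t_k)\ge0$ for all $t\in[0,T]$. *)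

theory Defs
  imports Complex_Main
begin

text \<open>Delta_T = {(t,s). 0 <= s <= t <= T}. A double kernel is a function of two real
  arguments; only its values on Delta_T matter.\<close>

definition Delta :: "real \<Rightarrow> (real \<times> real) set" where
  "Delta T = {(t, s). 0 \<le> s \<and> s \<le> t \<and> t \<le> T}"

definition preserves_nonneg :: "real \<Rightarrow> (real \<Rightarrow> real \<Rightarrow> real) \<Rightarrow> bool" where
  "preserves_nonneg T \<Gamma> \<longleftrightarrow>
    (\<forall>(K::nat) (x::nat \<Rightarrow> real) (tt::nat \<Rightarrow> real).
       1 \<le> K \<longrightarrow> 0 \<le> tt 1 \<longrightarrow> (\<forall>k\<in>{1..<K}. tt k < tt (Suc k)) \<longrightarrow> tt K < T \<longrightarrow>
       (\<forall>k\<in>{1..K}. 0 \<le> (\<Sum>k'=1..k. x k' * \<Gamma> (tt k) (tt k'))) \<longrightarrow>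
       (\<forall>t\<in>{0..T}. 0 \<le> (\<Sum>k\<in>{k\<in>{1..K}. tt k \<le> t}. x k * \<Gamma> t (tt k))))"

end

theory Submission
  imports Defs
begin

(* Restate preservation of nonnegativity for a finite set of times with weights indexed by time;
   reflecting t to T - t then needs no index reversal. Fix times Q below t in [0,T] and put
   P = {T - q | q in Q}, which lies above s0 = T - t. On the ordered set {s0} u P the kernel
   Gamma is lower triangular with diagonal gamma, so there is a "resolvent" row v with
   sum_{q <= r} v q Gamma(r,q) = [r = s0]. Feeding v into the hypothesis on Gamma at the times
   below r in P shows v r <= 0, and v s0 = 1/gamma. Transposing the triangular double sum that
   pairs v with the weights gives (1/gamma) * (sum we want) = - sum_{r in P} v r * C r, where the
   column sums C r >= 0 are exactly the hypotheses on the reflected kernel. *)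

lemma strict_mono_on_atLeastAtMost_SucI:
  fixes f :: "nat \<Rightarrow> 'a::order"
  assumes "\<forall>k\<in>{m..<n}. f k < f (Suc k)"
  shows "strict_mono_on {m..n} f"
proof (rule strict_mono_onI)
  fix i j assume "i \<in> {m..n}" "j \<in> {m..n}" "i < j"
  then show "f i < f j"
  proof (induction j)
    case (Suc j)
    then have "f j < f (Suc j)" using assms by auto
    with Suc show ?case by (cases "i = j") auto
  qed simp
qed

lemma finite_strict_mono_enumeration:
  fixes P :: "'a::linorder set"
  assumes "finite P"
  obtains tt where "strict_mono_on {1..card P} tt" and "tt ` {1..card P} = P"
proof
  define xs where "xs = sorted_list_of_set P"
  have xs: "sorted_wrt (<) xs" "set xs = P" "length xs = card P"
    using assms by (simp_all add: xs_def)
  show "strict_mono_on {1..card P} (\<lambda>k. xs ! (k - 1))"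
    by (rule strict_mono_onI) (use xs in \<open>auto intro: sorted_wrt_nth_less\<close>)
  show "(\<lambda>k. xs ! (k - 1)) ` {1..card P} = P"
  proof (intro equalityI subsetI)
    fix q assume "q \<in> P"
    then obtain i where "i < card P" "q = xs ! i"
      using xs by (auto simp: in_set_conv_nth)
    then show "q \<in> (\<lambda>k. xs ! (k - 1)) ` {1..card P}"
      by (intro image_eqI[where x = "Suc i"]) auto
  qed (use xs in \<open>auto intro!: nth_mem\<close>)
qed

lemma strict_mono_on_filter_le_eq:
  fixes tt :: "nat \<Rightarrow> 'a::linorder"
  assumes "strict_mono_on {1..K} tt" "j \<in> {1..K}"
  shows "{k \<in> {1..K}. tt k \<le> tt j} = {1..j}"
  using assms by (auto simp: strict_mono_on_less_eq)

lemma sum_filter_le_image_strict_mono_on: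
  fixes tt :: "nat \<Rightarrow> 'a::linorder"
  assumes "strict_mono_on {1..K} tt"
  shows "(\<Sum>q\<in>{q \<in> tt ` {1..K}. q \<le> a}. g q) = (\<Sum>k\<in>{k \<in> {1..K}. tt k \<le> a}. g (tt k))"
proof -
  have "{q \<in> tt ` {1..K}. q \<le> a} = tt ` {k \<in> {1..K}. tt k \<le> a}" by auto
  moreover have "inj_on tt {k \<in> {1..K}. tt k \<le> a}"
    using strict_mono_on_imp_inj_on[OF assms] by (rule inj_on_subset) auto
  ultimately show ?thesis by (simp add: sum.reindex)
qed

definition preserves_nonneg_sets :: "real \<Rightarrow> (real \<Rightarrow> real \<Rightarrow> real) \<Rightarrow> bool" where
  "preserves_nonneg_sets T \<Gamma> \<longleftrightarrow>
    (\<forall>P (x::real \<Rightarrow> real). finite P \<longrightarrow> P \<subseteq> {0..<T} \<longrightarrow>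
       (\<forall>p\<in>P. 0 \<le> (\<Sum>q\<in>{q \<in> P. q \<le> p}. x q * \<Gamma> p q)) \<longrightarrow>
       (\<forall>t\<in>{0..T}. 0 \<le> (\<Sum>q\<in>{q \<in> P. q \<le> t}. x q * \<Gamma> t q)))"

lemma preserves_nonnegD:
  assumes "preserves_nonneg T \<Gamma>" and "1 \<le> K" and "0 \<le> tt 1"
    and "\<forall>k\<in>{1..<K}. tt k < tt (Suc k)" and "tt K < T"
    and "\<forall>k\<in>{1..K}. 0 \<le> (\<Sum>k'=1..k. x k' * \<Gamma> (tt k) (tt k'))" and "t \<in> {0..T}"
  shows "0 \<le> (\<Sum>k\<in>{k \<in> {1..K}. tt k \<le> t}. x k * \<Gamma> t (tt k))"
  using assms unfolding preserves_nonneg_def by blast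

lemma preserves_nonneg_setsD:
  assumes "preserves_nonneg_sets T \<Gamma>" and "finite P" and "P \<subseteq> {0..<T}"
    and "\<forall>p\<in>P. 0 \<le> (\<Sum>q\<in>{q \<in> P. q \<le> p}. x q * \<Gamma> p q)" and "t \<in> {0..T}"
  shows "0 \<le> (\<Sum>q\<in>{q \<in> P. q \<le> t}. x q * \<Gamma> t q)"
  using assms unfolding preserves_nonneg_sets_def by blast

lemma preserves_nonneg_imp_sets:
  assumes "preserves_nonneg T \<Gamma>"
  shows "preserves_nonneg_sets T \<Gamma>"
  unfolding preserves_nonneg_sets_def
proof (intro allI impI ballI)
  fix P and x :: "real \<Rightarrow> real" and t
  assume P: "finite P" "P \<subseteq> {0..<T}"
    and rows: "\<forall>p\<in>P. 0 \<le> (\<Sum>q\<in>{q \<in> P. q \<le> p}. x q * \<Gamma> p q)" and t: "t \<in> {0..T}"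
  show "0 \<le> (\<Sum>q\<in>{q \<in> P. q \<le> t}. x q * \<Gamma> t q)"
  proof (cases "P = {}")
    case False
    obtain tt where mono: "strict_mono_on {1..card P} tt" and P_eq: "tt ` {1..card P} = P"
      using finite_strict_mono_enumeration[OF P(1)] by blast
    have K: "1 \<le> card P" using P(1) False by (simp add: Suc_le_eq card_gt_0_iff)
    have tt_P: "tt k \<in> P" if "k \<in> {1..card P}" for k using P_eq that by blast
    have sum_eq: "(\<Sum>q\<in>{q \<in> P. q \<le> a}. x q * \<Gamma> b q)
        = (\<Sum>k\<in>{k \<in> {1..card P}. tt k \<le> a}. x (tt k) * \<Gamma> b (tt k))" for a b
      using sum_filter_le_image_strict_mono_on[OF mono, of "\<lambda>q. x q * \<Gamma> b q" a]
      by (simp only: P_eq)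
    have "0 \<le> (\<Sum>k'=1..k. x (tt k') * \<Gamma> (tt k) (tt k'))" if "k \<in> {1..card P}" for k
      using bspec[OF rows tt_P[OF that]]
      unfolding sum_eq strict_mono_on_filter_le_eq[OF mono that] .
    then have tt_rows: "\<forall>k\<in>{1..card P}. 0 \<le> (\<Sum>k'=1..k. x (tt k') * \<Gamma> (tt k) (tt k'))"
      by blast
    have tt_steps: "\<forall>k\<in>{1..<card P}. tt k < tt (Suc k)"
      using strict_mono_onD[OF mono] by simp
    have tt_bounds: "0 \<le> tt 1" "tt (card P) < T" using tt_P K P(2) by force+
    show ?thesis
      unfolding sum_eq by (rule preserves_nonnegD[OF assms K tt_bounds(1) tt_steps tt_bounds(2) tt_rows t])
  qed simp
qed

lemma preserves_nonneg_sets_imp_preserves_nonneg: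
  assumes "preserves_nonneg_sets T \<Gamma>"
  shows "preserves_nonneg T \<Gamma>"
  unfolding preserves_nonneg_def
proof (intro allI impI ballI)
  fix K and x tt :: "nat \<Rightarrow> real" and t
  assume K: "1 \<le> K" and first: "0 \<le> tt 1" and steps: "\<forall>k\<in>{1..<K}. tt k < tt (Suc k)"
    and last: "tt K < T" and rows: "\<forall>k\<in>{1..K}. 0 \<le> (\<Sum>k'=1..k. x k' * \<Gamma> (tt k) (tt k'))"
    and t: "t \<in> {0..T}"
  have mono: "strict_mono_on {1..K} tt"
    using steps by (rule strict_mono_on_atLeastAtMost_SucI)
  define w where "w = x \<circ> the_inv_into {1..K} tt"
  have w: "w (tt k) = x k" if "k \<in> {1..K}" for k
    using the_inv_into_f_f[OF strict_mono_on_imp_inj_on[OF mono] that] by (simp add: w_def)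
  have sum_eq: "(\<Sum>q\<in>{q \<in> tt ` {1..K}. q \<le> a}. w q * \<Gamma> b q)
      = (\<Sum>k\<in>{k \<in> {1..K}. tt k \<le> a}. x k * \<Gamma> b (tt k))" for a b
    unfolding sum_filter_le_image_strict_mono_on[OF mono] by (rule sum.cong) (simp_all add: w)
  have "tt k \<in> {0..<T}" if "k \<in> {1..K}" for k
    using strict_mono_on_less_eq[OF mono, of 1 k] strict_mono_on_less_eq[OF mono, of k K]
      that K first last by auto
  then have sub: "tt ` {1..K} \<subseteq> {0..<T}" by blast
  have tt_rows: "\<forall>p\<in>tt ` {1..K}. 0 \<le> (\<Sum>q\<in>{q \<in> tt ` {1..K}. q \<le> p}. w q * \<Gamma> p q)"
  proof
    fix p assume "p \<in> tt ` {1..K}"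
    then obtain k where k: "k \<in> {1..K}" "p = tt k" by blast
    show "0 \<le> (\<Sum>q\<in>{q \<in> tt ` {1..K}. q \<le> p}. w q * \<Gamma> p q)"
      using bspec[OF rows k(1)]
      unfolding k(2) sum_eq strict_mono_on_filter_le_eq[OF mono k(1)] .
  qed
  show "0 \<le> (\<Sum>k\<in>{k \<in> {1..K}. tt k \<le> t}. x k * \<Gamma> t (tt k))"
    unfolding sum_eq[symmetric]
    using preserves_nonneg_setsD[OF assms _ sub tt_rows t] by simp
qed

lemma lower_triangular_solvable:
  fixes R :: "'a::linorder set" and a :: "'a \<Rightarrow> 'a \<Rightarrow> 'b::field"
  assumes "finite R" and "\<forall>r\<in>R. a r r \<noteq> 0"
  shows "\<exists>v. \<forall>r\<in>R. (\<Sum>q\<in>{q \<in> R. q \<le> r}. v q * a r q) = c r"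
  using assms
proof (induction R rule: finite_linorder_max_induct)
  case (insert b A)
  then obtain v where v: "\<forall>r\<in>A. (\<Sum>q\<in>{q \<in> A. q \<le> r}. v q * a r q) = c r" by auto
  define v' where "v' = v(b := (c b - (\<Sum>q\<in>A. v q * a b q)) / a b b)"
  have "b \<notin> A" and "a b b \<noteq> 0" using insert by auto
  have v'_A: "v' q = v q" if "q \<in> A" for q using \<open>b \<notin> A\<close> that by (auto simp: v'_def)
  have "{q \<in> insert b A. q \<le> b} = insert b A" using insert.hyps by (auto intro: less_imp_le)
  then have "(\<Sum>q\<in>{q \<in> insert b A. q \<le> b}. v' q * a b q) = v' b * a b b + (\<Sum>q\<in>A. v q * a b q)"
    using \<open>b \<notin> A\<close> insert.hyps(1) v'_A by simp
  also have "\<dots> = c b" using \<open>a b b \<noteq> 0\<close> by (simp add: v'_def)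
  finally have "(\<Sum>q\<in>{q \<in> insert b A. q \<le> b}. v' q * a b q) = c b" .
  moreover have "(\<Sum>q\<in>{q \<in> insert b A. q \<le> r}. v' q * a r q) = c r" if "r \<in> A" for r
  proof -
    have "{q \<in> insert b A. q \<le> r} = {q \<in> A. q \<le> r}" using insert.hyps that by force
    then show ?thesis using v that v'_A by simp
  qed
  ultimately show ?case by blast
qed simp

lemma sum_lower_triangular_transpose:
  fixes R :: "'a::linorder set" and a :: "'a \<Rightarrow> 'a \<Rightarrow> 'b::comm_semiring_1"
  assumes "finite R"
  shows "(\<Sum>r\<in>R. v r * (\<Sum>s\<in>{s \<in> R. r \<le> s}. y s * a s r))
       = (\<Sum>s\<in>R. y s * (\<Sum>r\<in>{r \<in> R. r \<le> s}. v r * a s r))"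
  using sum.swap_restrict[OF assms assms, of "\<lambda>r s. v r * (y s * a s r)" "(\<le>)"]
  by (simp add: sum_distrib_left mult.left_commute)

lemma preserves_nonneg_sets_triangular_diag_le:
  assumes pn: "preserves_nonneg_sets T \<Gamma>" and R: "finite R" "R \<subseteq> {0..T}"
    and rows: "\<forall>r\<in>R. (\<Sum>q\<in>{q \<in> R. q \<le> r}. v q * \<Gamma> r q) = c r"
    and c_nonneg: "\<forall>r\<in>R. 0 \<le> c r" and r: "r \<in> R"
  shows "v r * \<Gamma> r r \<le> c r"
proof -
  define B where "B = {q \<in> R. q < r}"
  have B: "finite B" "B \<subseteq> {0..<T}"
    using R r by (auto simp: B_def subset_iff intro: less_le_trans)
  have "\<forall>p\<in>B. 0 \<le> (\<Sum>q\<in>{q \<in> B. q \<le> p}. v q * \<Gamma> p q)"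
  proof
    fix p assume "p \<in> B"
    then have "{q \<in> B. q \<le> p} = {q \<in> R. q \<le> p}" and "p \<in> R" by (auto simp: B_def)
    then show "0 \<le> (\<Sum>q\<in>{q \<in> B. q \<le> p}. v q * \<Gamma> p q)" using rows c_nonneg by simp
  qed
  moreover have "r \<in> {0..T}" using R r by blast
  ultimately have "0 \<le> (\<Sum>q\<in>{q \<in> B. q \<le> r}. v q * \<Gamma> r q)"
    by (rule preserves_nonneg_setsD[OF pn B])
  also have "{q \<in> B. q \<le> r} = B" by (auto simp: B_def)
  finally have below: "0 \<le> (\<Sum>q\<in>B. v q * \<Gamma> r q)" .
  have "{q \<in> R. q \<le> r} = insert r B" and "r \<notin> B" using r by (auto simp: B_def)
  then have "(\<Sum>q\<in>{q \<in> R. q \<le> r}. v q * \<Gamma> r q) = v r * \<Gamma> r r + (\<Sum>q\<in>B. v q * \<Gamma> r q)"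
    using B(1) by simp
  with below rows r show ?thesis by simp
qed

lemma preserves_nonneg_sets_resolvent:
  fixes P :: "real set"
  assumes pn: "preserves_nonneg_sets T \<Gamma>" and diag: "\<forall>s\<in>{0..T}. \<Gamma> s s = \<gamma>" and "\<gamma> > 0"
    and P: "finite P" "P \<subseteq> {s\<^sub>0<..T}" and s\<^sub>0: "s\<^sub>0 \<in> {0..T}"
  obtains v where "\<forall>r\<in>insert s\<^sub>0 P.
      (\<Sum>q\<in>{q \<in> insert s\<^sub>0 P. q \<le> r}. v q * \<Gamma> r q) = (if r = s\<^sub>0 then 1 else 0)"
    and "v s\<^sub>0 = 1 / \<gamma>" and "\<forall>r\<in>P. v r \<le> 0"
proof -
  define R where "R = insert s\<^sub>0 P"
  define c where "c r = (if r = s\<^sub>0 then 1 else 0 :: real)" for r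
  have R: "finite R" "R \<subseteq> {0..T}" and "s\<^sub>0 \<notin> P" using P s\<^sub>0 by (auto simp: R_def)
  have "\<forall>r\<in>R. \<Gamma> r r \<noteq> 0" using R(2) diag \<open>\<gamma> > 0\<close> by auto
  then obtain v where rows: "\<forall>r\<in>R. (\<Sum>q\<in>{q \<in> R. q \<le> r}. v q * \<Gamma> r q) = c r"
    using lower_triangular_solvable[OF R(1)] by blast
  have "v r \<le> 0" if "r \<in> P" for r
  proof -
    have "r \<in> R" and "r \<noteq> s\<^sub>0" using that \<open>s\<^sub>0 \<notin> P\<close> by (auto simp: R_def)
    moreover have "\<forall>r\<in>R. 0 \<le> c r" by (simp add: c_def)
    ultimately have "v r * \<Gamma> r r \<le> 0"
      using preserves_nonneg_sets_triangular_diag_le[OF pn R rows] by (force simp: c_def)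
    moreover have "\<Gamma> r r = \<gamma>" using \<open>r \<in> R\<close> R(2) diag by blast
    ultimately show ?thesis using \<open>\<gamma> > 0\<close> by (simp add: mult_le_0_iff)
  qed
  moreover have "{q \<in> R. q \<le> s\<^sub>0} = {s\<^sub>0}" using P by (auto simp: R_def)
  then have "v s\<^sub>0 * \<gamma> = 1" using bspec[OF rows, of s\<^sub>0] diag s\<^sub>0 by (simp add: R_def c_def)
  then have "v s\<^sub>0 = 1 / \<gamma>" using \<open>\<gamma> > 0\<close> by (simp add: eq_divide_eq)
  ultimately show ?thesis using that rows by (simp add: R_def c_def)
qed

lemma preserves_nonneg_sets_columns_imp_nonneg:
  fixes P :: "real set"
  assumes pn: "preserves_nonneg_sets T \<Gamma>" and diag: "\<forall>s\<in>{0..T}. \<Gamma> s s = \<gamma>" and "\<gamma> > 0"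
    and P: "finite P" "P \<subseteq> {s\<^sub>0<..T}" and s\<^sub>0: "s\<^sub>0 \<in> {0..T}"
    and cols: "\<forall>r\<in>P. 0 \<le> (\<Sum>s\<in>{s \<in> P. r \<le> s}. y s * \<Gamma> s r)"
  shows "0 \<le> (\<Sum>s\<in>P. y s * \<Gamma> s s\<^sub>0)"
proof -
  define R where "R = insert s\<^sub>0 P"
  obtain v where rows: "\<forall>r\<in>R. (\<Sum>q\<in>{q \<in> R. q \<le> r}. v q * \<Gamma> r q) = (if r = s\<^sub>0 then 1 else 0)"
    and v_s\<^sub>0: "v s\<^sub>0 = 1 / \<gamma>" and v_P: "\<forall>r\<in>P. v r \<le> 0"
    using preserves_nonneg_sets_resolvent[OF pn diag \<open>\<gamma> > 0\<close> P s\<^sub>0] unfolding R_def .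
  have "s\<^sub>0 \<notin> P" using P by auto
  define y' where "y' = y(s\<^sub>0 := 0)"
  have y'_P: "y' s = y s" if "s \<in> P" for s using that \<open>s\<^sub>0 \<notin> P\<close> by (auto simp: y'_def)
  have "{s \<in> R. s\<^sub>0 \<le> s} = insert s\<^sub>0 P" using P by (auto simp: R_def)
  then have col_s\<^sub>0: "(\<Sum>s\<in>{s \<in> R. s\<^sub>0 \<le> s}. y' s * \<Gamma> s s\<^sub>0) = (\<Sum>s\<in>P. y s * \<Gamma> s s\<^sub>0)"
    using P(1) \<open>s\<^sub>0 \<notin> P\<close> y'_P by (simp add: y'_def cong: sum.cong)
  have col_P: "(\<Sum>s\<in>{s \<in> R. r \<le> s}. y' s * \<Gamma> s r) = (\<Sum>s\<in>{s \<in> P. r \<le> s}. y s * \<Gamma> s r)"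
    if "r \<in> P" for r
  proof -
    have "{s \<in> R. r \<le> s} = {s \<in> P. r \<le> s}" using P that by (auto simp: R_def)
    then show ?thesis by (auto simp: y'_P intro!: sum.cong)
  qed
  have "v s\<^sub>0 * (\<Sum>s\<in>P. y s * \<Gamma> s s\<^sub>0) + (\<Sum>r\<in>P. v r * (\<Sum>s\<in>{s \<in> P. r \<le> s}. y s * \<Gamma> s r))
      = (\<Sum>r\<in>R. v r * (\<Sum>s\<in>{s \<in> R. r \<le> s}. y' s * \<Gamma> s r))"
    using P(1) \<open>s\<^sub>0 \<notin> P\<close> col_s\<^sub>0 col_P by (simp add: R_def cong: sum.cong)
  also have "\<dots> = (\<Sum>s\<in>R. y' s * (\<Sum>r\<in>{r \<in> R. r \<le> s}. v r * \<Gamma> s r))"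
    by (rule sum_lower_triangular_transpose) (simp add: R_def P(1))
  also have "\<dots> = (\<Sum>s\<in>R. y' s * (if s = s\<^sub>0 then 1 else 0))"
    using rows by simp
  also have "\<dots> = 0" by (rule sum.neutral) (simp add: y'_def)
  finally have "(\<Sum>s\<in>P. y s * \<Gamma> s s\<^sub>0) / \<gamma> = - (\<Sum>r\<in>P. v r * (\<Sum>s\<in>{s \<in> P. r \<le> s}. y s * \<Gamma> s r))"
    using v_s\<^sub>0 by simp
  also have "\<dots> \<ge> 0" using v_P cols by (simp add: sum_nonpos mult_nonpos_nonneg)
  finally show ?thesis using \<open>\<gamma> > 0\<close> by (simp add: zero_le_divide_iff)
qed

lemma preserves_nonneg_sets_reflect:
  assumes pn: "preserves_nonneg_sets T \<Gamma>" and diag: "\<forall>s\<in>{0..T}. \<Gamma> s s = \<gamma>" and "\<gamma> > 0"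
  shows "preserves_nonneg_sets T (\<lambda>t s. \<Gamma> (T - s) (T - t))"
  unfolding preserves_nonneg_sets_def
proof (intro allI impI ballI)
  fix Q and x :: "real \<Rightarrow> real" and t
  assume Q: "finite Q" "Q \<subseteq> {0..<T}" and t: "t \<in> {0..T}"
    and rows: "\<forall>p\<in>Q. 0 \<le> (\<Sum>q\<in>{q \<in> Q. q \<le> p}. x q * \<Gamma> (T - q) (T - p))"
  show "0 \<le> (\<Sum>q\<in>{q \<in> Q. q \<le> t}. x q * \<Gamma> (T - q) (T - t))"
  proof (cases "t \<in> Q")
    case True
    then show ?thesis using rows by blast
  next
    case False
    define P where "P = (\<lambda>q. T - q) ` {q \<in> Q. q \<le> t}"
    have inj: "inj_on (\<lambda>q. T - q) A" for A :: "real set" by (rule inj_onI) simp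
    have "finite P" using Q(1) by (simp add: P_def)
    moreover have "P \<subseteq> {T - t<..T}"
    proof
      fix s assume "s \<in> P"
      then obtain q where "q \<in> Q" "q \<le> t" "s = T - q" by (auto simp: P_def)
      moreover from \<open>q \<in> Q\<close> False have "q \<noteq> t" by blast
      ultimately show "s \<in> {T - t<..T}" using Q(2) by auto
    qed
    moreover have "T - t \<in> {0..T}" using t by simp
    moreover have "\<forall>r\<in>P. 0 \<le> (\<Sum>s\<in>{s \<in> P. r \<le> s}. x (T - s) * \<Gamma> s r)"
    proof
      fix r assume "r \<in> P"
      then obtain p where p: "p \<in> Q" "p \<le> t" "r = T - p" by (auto simp: P_def)
      then have "{s \<in> P. r \<le> s} = (\<lambda>q. T - q) ` {q \<in> Q. q \<le> p}" by (force simp: P_def)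
      then show "0 \<le> (\<Sum>s\<in>{s \<in> P. r \<le> s}. x (T - s) * \<Gamma> s r)"
        using rows p by (simp add: sum.reindex[OF inj])
    qed
    ultimately have "0 \<le> (\<Sum>s\<in>P. x (T - s) * \<Gamma> s (T - t))"
      by (rule preserves_nonneg_sets_columns_imp_nonneg[OF pn diag \<open>\<gamma> > 0\<close>])
    then show ?thesis by (simp add: P_def sum.reindex[OF inj])
  qed
qed

theorem corollaryC:
  fixes T \<gamma> :: real and \<Gamma> :: "real \<Rightarrow> real \<Rightarrow> real"
  assumes "T > 0"
    and "\<forall>(t, s)\<in>Delta T. 0 \<le> \<Gamma> t s"
    and "preserves_nonneg T \<Gamma>"
    and "\<gamma> > 0"
    and "\<forall>s\<in>{0..T}. \<Gamma> s s = \<gamma>"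
  shows "preserves_nonneg T (\<lambda>t s. \<Gamma> (T - s) (T - t))"
proof -
  have "preserves_nonneg_sets T \<Gamma>" using assms(3) by (rule preserves_nonneg_imp_sets)
  then have "preserves_nonneg_sets T (\<lambda>t s. \<Gamma> (T - s) (T - t))"
    using assms(5,4) by (rule preserves_nonneg_sets_reflect)
  then show ?thesis by (rule preserves_nonneg_sets_imp_preserves_nonneg)
qed

end
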